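(* Let $A:\mathbb{R}^n\to\mathbb{R}^n$ be a linear operator that is GTP (respectively, GSTP) with respect to a totally positive structure $\{K_1,\ldots,K_n\}$. Then the adjoint operator $A^*$ is GTP (respectively, GSTP) with respect to the totally positive structure $\{K_1^*,\ldots,K_n^*\}$.
   Context: A proper cone is a closed convex cone that is pointed and solid. $\wedge^j\mathbb{R}^n$ is the $j$th exterior power of $\mathbb{R}^n$, with inner product $\langle x_1\wedge\cdots\wedge x_j,y_1\wedge\cdots\wedge y_j\rangle=\det(\langle x_k,y_l\rangle)_{k,l=1}^j$; via these inner products dual spaces are identified with the spaces themselves, the adjoint $A^*$ is the transpose, and for a proper cone $K$ its adjoint cone is $K^*=\{x^*:\langle y,x^*\rangle\ge0\ \forall y\in K\}$. $\wedge^jA$ denotes the operator with $(\wedge^jA)(x_1\wedge\cdots\wedge x_j)=Ax_1\wedge\cdots\wedge Ax_j$. $B$ is $K$-nonnegative if $BK\subseteq K$, $K$-positive if $B(K\setminus\{0\})\subseteq\operatorname{int}K$. A totally positive structure is a family $\{K_1,\ldots,K_n\}$ with $K_j\subset\wedge^j\mathbb{R}^n$ proper cones; $A$ is GTP (GSTP) with respect to it if $\wedge^jA$ is $K_j$-nonnegative (resp. $K_j$-positive) for all $j=1,\ldots,n$. *)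

theory Defs
  imports "HOL-Analysis.Analysis"
begin

text \<open>R^n is modelled by vectors
indexed by 0..n-1 and a linear operator by its matrix A :: nat => nat => real
(entry A i k, i,k < n).  The j-th exterior power is modelled in the standard
basis e_I = e_(i1) wedge ... wedge e_(ij), i1 < ... < ij, indexed by the j-subsets I
of {0..n-1}; an element is a function nat set => real vanishing off these
subsets.  The determinantal inner product makes this basis orthonormal, so
the inner product is the coordinate dot product.\<close>

definition subsets :: "nat \<Rightarrow> nat \<Rightarrow> nat set set" where
  "subsets n j = {I. I \<subseteq> {..<n} \<and> card I = j}"

definition wedge_space :: "nat \<Rightarrow> nat \<Rightarrow> (nat set \<Rightarrow> real) set" where
  "wedge_space n j = {x. \<forall>I. I \<notin> subsets n j \<longrightarrow> x I = 0}"

definition winner :: "nat \<Rightarrow> nat \<Rightarrow> (nat set \<Rightarrow> real) \<Rightarrow> (nat set \<Rightarrow> real) \<Rightarrow> real" where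
  "winner n j x y = (\<Sum>I\<in>subsets n j. x I * y I)"

definition wnorm :: "nat \<Rightarrow> nat \<Rightarrow> (nat set \<Rightarrow> real) \<Rightarrow> real" where
  "wnorm n j x = sqrt (winner n j x x)"

definition ldet :: "nat \<Rightarrow> (nat \<Rightarrow> nat \<Rightarrow> real) \<Rightarrow> real" where
  "ldet j M = (\<Sum>p | p permutes {..<j}. of_int (sign p) * (\<Prod>k<j. M k (p k)))"

definition minor :: "(nat \<Rightarrow> nat \<Rightarrow> real) \<Rightarrow> nat set \<Rightarrow> nat set \<Rightarrow> real" where
  "minor A I J = ldet (card I)
     (\<lambda>k l. A (sorted_list_of_set I ! k) (sorted_list_of_set J ! l))"

text \<open>The operator wedge^j A on wedge^j R^n: its matrix in the basis e_I is the
j-th compound matrix (this is exactly the map with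
(wedge^j A)(x1 wedge ... wedge xj) = A x1 wedge ... wedge A xj).\<close>
definition wedge_op :: "nat \<Rightarrow> nat \<Rightarrow> (nat \<Rightarrow> nat \<Rightarrow> real) \<Rightarrow> (nat set \<Rightarrow> real) \<Rightarrow> (nat set \<Rightarrow> real)" where
  "wedge_op n j A x = (\<lambda>I. if I \<in> subsets n j then (\<Sum>J\<in>subsets n j. minor A I J * x J) else 0)"

definition adjoint_mat :: "(nat \<Rightarrow> nat \<Rightarrow> real) \<Rightarrow> (nat \<Rightarrow> nat \<Rightarrow> real)" where
  "adjoint_mat A = (\<lambda>i k. A k i)"

definition winterior :: "nat \<Rightarrow> nat \<Rightarrow> (nat set \<Rightarrow> real) set \<Rightarrow> (nat set \<Rightarrow> real) set" where
  "winterior n j K = {x \<in> K. \<exists>e>0. \<forall>y\<in>wedge_space n j.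
       wnorm n j (\<lambda>I. y I - x I) < e \<longrightarrow> y \<in> K}"

definition proper_cone :: "nat \<Rightarrow> nat \<Rightarrow> (nat set \<Rightarrow> real) set \<Rightarrow> bool" where
  "proper_cone n j K \<longleftrightarrow>
     K \<subseteq> wedge_space n j \<and>
     closed K \<and>
     (\<forall>x\<in>K. \<forall>y\<in>K. (\<lambda>I. x I + y I) \<in> K) \<and>
     (\<forall>x\<in>K. \<forall>c::real. c \<ge> 0 \<longrightarrow> (\<lambda>I. c * x I) \<in> K) \<and>
     (\<forall>x. x \<in> K \<and> (\<lambda>I. - x I) \<in> K \<longrightarrow> x = (\<lambda>_. 0)) \<and>
     winterior n j K \<noteq> {}"

definition adjoint_cone :: "nat \<Rightarrow> nat \<Rightarrow> (nat set \<Rightarrow> real) set \<Rightarrow> (nat set \<Rightarrow> real) set" where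
  "adjoint_cone n j K = {y \<in> wedge_space n j. \<forall>x\<in>K. winner n j x y \<ge> 0}"

definition K_nonnegative :: "((nat set \<Rightarrow> real) \<Rightarrow> (nat set \<Rightarrow> real)) \<Rightarrow> (nat set \<Rightarrow> real) set \<Rightarrow> bool" where
  "K_nonnegative B K \<longleftrightarrow> (\<forall>x\<in>K. B x \<in> K)"

definition K_positive :: "nat \<Rightarrow> nat \<Rightarrow> ((nat set \<Rightarrow> real) \<Rightarrow> (nat set \<Rightarrow> real)) \<Rightarrow> (nat set \<Rightarrow> real) set \<Rightarrow> bool" where
  "K_positive n j B K \<longleftrightarrow> (\<forall>x\<in>K - {\<lambda>_. 0}. B x \<in> winterior n j K)"

definition totally_positive_structure :: "nat \<Rightarrow> (nat \<Rightarrow> (nat set \<Rightarrow> real) set) \<Rightarrow> bool" where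
  "totally_positive_structure n K \<longleftrightarrow> (\<forall>j\<in>{1..n}. proper_cone n j (K j))"

definition GTP :: "nat \<Rightarrow> (nat \<Rightarrow> nat \<Rightarrow> real) \<Rightarrow> (nat \<Rightarrow> (nat set \<Rightarrow> real) set) \<Rightarrow> bool" where
  "GTP n A K \<longleftrightarrow> (\<forall>j\<in>{1..n}. K_nonnegative (wedge_op n j A) (K j))"

definition GSTP :: "nat \<Rightarrow> (nat \<Rightarrow> nat \<Rightarrow> real) \<Rightarrow> (nat \<Rightarrow> (nat set \<Rightarrow> real) set) \<Rightarrow> bool" where
  "GSTP n A K \<longleftrightarrow> (\<forall>j\<in>{1..n}. K_positive n j (wedge_op n j A) (K j))"

end

theory Submission
  imports Defs
begin

text \<open>The j-th compound matrix of the transpose is the transpose of the compound matrix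
  (minors of a transpose), so \<open>\<And>\<^sup>j A\<^sup>*\<close> is the adjoint of \<open>\<And>\<^sup>j A\<close> for the coordinate inner
  product, and nonnegativity dualises at once:
  \<open>\<langle>x, (\<And>\<^sup>j A\<^sup>*) z\<rangle> = \<langle>(\<And>\<^sup>j A) x, z\<rangle> \<ge> 0\<close>.
  Positivity dualises through two facts about a proper cone K: an interior point of K pairs
  strictly positively with every nonzero element of \<open>K\<^sup>*\<close>, and y is interior to \<open>K\<^sup>*\<close> as soon
  as \<open>\<langle>x, y\<rangle> \<ge> c \<parallel>x\<parallel>\<close> on K for some c > 0, which by compactness of the unit sphere of K
  follows from strict positivity of \<open>\<langle>\<cdot>, y\<rangle>\<close> on that sphere. The same facts, together with the
  separation of nonzero points of K by functionals in \<open>K\<^sup>*\<close> (obtained by nearest-point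
  projection onto K), show that \<open>K\<^sup>*\<close> is again a proper cone.\<close>

section \<open>Compound matrices of the transpose\<close>

lemma ldet_transpose: "ldet j (\<lambda>k l. M l k) = ldet j M"
proof -
  let ?U = "{..<j::nat}"
  have "of_int (sign (inv p)) * (\<Prod>k<j. M (inv p k) k) = of_int (sign p) * (\<Prod>k<j. M k (p k))"
    if p: "p permutes ?U" for p
  proof -
    have "sign (inv p) = sign p"
      by (metis sign_inverse finite_lessThan p permutation_permutes)
    moreover have "inj_on p ?U"
      using permutes_inj[OF p] by (blast intro: inj_on_subset)
    then have "(\<Prod>k<j. M (inv p k) k) = (\<Prod>k<j. M (inv p (p k)) (p k))"
      using prod.reindex[of p ?U "\<lambda>k. M (inv p k) k"] permutes_image[OF p] by simp
    ultimately show ?thesis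
      using permutes_inverses(2)[OF p] by simp
  qed
  then show ?thesis unfolding ldet_def
    by (subst sum_permutations_inverse) (auto intro: sum.cong)
qed

lemma minor_adjoint_mat:
  assumes "I \<in> subsets n j" "J \<in> subsets n j"
  shows "minor (adjoint_mat A) I J = minor A J I"
proof -
  have "card I = card J" using assms by (simp add: subsets_def)
  then show ?thesis unfolding minor_def adjoint_mat_def
    using ldet_transpose[of "card J" "\<lambda>k l. A (sorted_list_of_set J ! k) (sorted_list_of_set I ! l)"]
    by simp
qed

lemma winner_wedge_op_adjoint_mat:
  "winner n j x (wedge_op n j (adjoint_mat A) z) = winner n j (wedge_op n j A x) z"
proof -
  have "winner n j x (wedge_op n j (adjoint_mat A) z)
     = (\<Sum>I\<in>subsets n j. \<Sum>J\<in>subsets n j. x I * (minor A J I * z J))"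
    unfolding winner_def wedge_op_def
    by (auto simp: sum_distrib_left minor_adjoint_mat intro!: sum.cong)
  also have "\<dots> = (\<Sum>J\<in>subsets n j. \<Sum>I\<in>subsets n j. x I * (minor A J I * z J))"
    by (rule sum.swap)
  also have "\<dots> = winner n j (wedge_op n j A x) z"
    unfolding winner_def wedge_op_def
    by (auto simp: sum_distrib_right intro!: sum.cong)
  finally show ?thesis .
qed

lemma wedge_op_in_wedge_space: "wedge_op n j A x \<in> wedge_space n j"
  unfolding wedge_op_def wedge_space_def by auto

section \<open>The Euclidean structure of the exterior power\<close>

lemma finite_subsets [simp]: "finite (subsets n j)"
  unfolding subsets_def by (rule finite_subset[of _ "Pow {..<n}"]) auto

lemma winner_add_left [simp]:
  "winner n j (\<lambda>I. x I + y I) z = winner n j x z + winner n j y z"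
  unfolding winner_def by (simp add: algebra_simps sum.distrib)

lemma winner_add_right [simp]:
  "winner n j z (\<lambda>I. x I + y I) = winner n j z x + winner n j z y"
  unfolding winner_def by (simp add: algebra_simps sum.distrib)

lemma winner_diff_left [simp]:
  "winner n j (\<lambda>I. x I - y I) z = winner n j x z - winner n j y z"
  unfolding winner_def by (simp add: algebra_simps sum_subtractf)

lemma winner_diff_right [simp]:
  "winner n j z (\<lambda>I. x I - y I) = winner n j z x - winner n j z y"
  unfolding winner_def by (simp add: algebra_simps sum_subtractf)

lemma winner_minus_right [simp]: "winner n j x (\<lambda>I. - y I) = - winner n j x y"
  unfolding winner_def by (simp add: sum_negf)

lemma winner_minus_left [simp]: "winner n j (\<lambda>I. - x I) y = - winner n j x y"
  unfolding winner_def by (simp add: sum_negf)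

lemma winner_scale_left [simp]: "winner n j (\<lambda>I. c * x I) y = c * winner n j x y"
  unfolding winner_def by (simp add: sum_distrib_left algebra_simps)

lemma winner_scale_right [simp]: "winner n j x (\<lambda>I. c * y I) = c * winner n j x y"
  unfolding winner_def by (simp add: sum_distrib_left algebra_simps)

lemma winner_sum_right: "winner n j x (\<lambda>I. \<Sum>r\<in>F. r I) = (\<Sum>r\<in>F. winner n j x r)"
  unfolding winner_def sum_distrib_left by (rule sum.swap)

lemma winner_commute: "winner n j x y = winner n j y x"
  unfolding winner_def by (simp add: mult.commute)

lemma winner_zero_left [simp]: "winner n j (\<lambda>_. 0) y = 0"
  unfolding winner_def by simp

lemma wnorm_eq_L2_set: "wnorm n j x = L2_set x (subsets n j)"
  unfolding wnorm_def winner_def L2_set_def by (simp add: power2_eq_square)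

lemma winner_self: "winner n j x x = (wnorm n j x)\<^sup>2"
  unfolding wnorm_def winner_def by (simp add: sum_nonneg)

lemma wnorm_zero [simp]: "wnorm n j (\<lambda>_. 0) = 0"
  by (simp add: wnorm_def winner_def)

lemma wnorm_nonneg: "wnorm n j x \<ge> 0"
  by (simp add: wnorm_eq_L2_set)

lemma abs_winner_le: "\<bar>winner n j x y\<bar> \<le> wnorm n j x * wnorm n j y"
proof -
  have "\<bar>winner n j x y\<bar> \<le> (\<Sum>I\<in>subsets n j. \<bar>x I\<bar> * \<bar>y I\<bar>)"
    unfolding winner_def by (metis (no_types, lifting) abs_mult sum.cong sum_abs)
  also have "\<dots> \<le> wnorm n j x * wnorm n j y"
    unfolding wnorm_eq_L2_set by (rule L2_set_mult_ineq)
  finally show ?thesis .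
qed

lemma wnorm_add_le: "wnorm n j (\<lambda>I. x I + y I) \<le> wnorm n j x + wnorm n j y"
  unfolding wnorm_eq_L2_set by (rule L2_set_triangle_ineq)

lemma abs_le_wnorm: "I \<in> subsets n j \<Longrightarrow> \<bar>x I\<bar> \<le> wnorm n j x"
  unfolding wnorm_eq_L2_set using member_le_L2_set[of "subsets n j" I "\<lambda>I. \<bar>x I\<bar>"]
  by (simp add: L2_set_def)

lemma wnorm_scale: "wnorm n j (\<lambda>I. c * x I) = \<bar>c\<bar> * wnorm n j x"
  unfolding wnorm_eq_L2_set L2_set_def
  by (simp add: power_mult_distrib sum_distrib_left[symmetric] real_sqrt_mult)

lemma wnorm_eq_0_iff: "x \<in> wedge_space n j \<Longrightarrow> wnorm n j x = 0 \<longleftrightarrow> x = (\<lambda>_. 0)"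
  unfolding wnorm_eq_L2_set wedge_space_def
  by (subst L2_set_eq_0_iff) (auto simp: fun_eq_iff)

lemma wnorm_pos: "x \<in> wedge_space n j \<Longrightarrow> x \<noteq> (\<lambda>_. 0) \<Longrightarrow> wnorm n j x > 0"
  using wnorm_eq_0_iff wnorm_nonneg by (metis less_eq_real_def)

lemma wnorm_eq_1_imp_nonzero: "wnorm n j x = 1 \<Longrightarrow> x \<noteq> (\<lambda>_. 0)"
  by auto

lemma continuous_on_winner_left [continuous_intros]: "continuous_on U (\<lambda>x. winner n j x y)"
  unfolding winner_def
  by (intro continuous_intros continuous_on_subset[OF continuous_on_product_coordinates]) auto

lemma continuous_on_winner_right [continuous_intros]: "continuous_on U (\<lambda>y. winner n j x y)"
  unfolding winner_def
  by (intro continuous_intros continuous_on_subset[OF continuous_on_product_coordinates]) auto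

lemma continuous_on_wnorm [continuous_intros]: "continuous_on U (\<lambda>x. wnorm n j x)"
  unfolding wnorm_def winner_def
  by (intro continuous_intros continuous_on_subset[OF continuous_on_product_coordinates]) auto

lemma closed_wedge_space: "closed (wedge_space n j)"
proof -
  have "wedge_space n j = (\<Inter>I\<in>-subsets n j. {x. x I = 0})"
    unfolding wedge_space_def by auto
  moreover have "closed {x::nat set \<Rightarrow> real. x I = 0}" for I
    by (rule closed_Collect_eq) (auto intro: continuous_on_product_coordinates)
  ultimately show ?thesis by auto
qed

lemma compact_Int_wnorm_le:
  assumes "closed F" "F \<subseteq> wedge_space n j"
  shows "compact (F \<inter> {x. wnorm n j x \<le> r})"
proof -
  define B where "B = PiE UNIV (\<lambda>I. if I \<in> subsets n j then {-r..r} else {0::real})"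
  have "compactin (product_topology (\<lambda>_. euclidean) UNIV) B"
    unfolding B_def compactin_PiE by auto
  then have "compact B" by (simp add: euclidean_product_topology)
  moreover have "F \<inter> {x. wnorm n j x \<le> r} \<subseteq> B"
  proof
    fix x assume x: "x \<in> F \<inter> {x. wnorm n j x \<le> r}"
    have "x I \<in> (if I \<in> subsets n j then {-r..r} else {0})" for I
      using x assms(2) abs_le_wnorm[of I n j x] unfolding wedge_space_def by auto
    then show "x \<in> B" unfolding B_def by auto
  qed
  moreover have "closed (F \<inter> {x. wnorm n j x \<le> r})"
    by (intro closed_Int assms closed_Collect_le continuous_intros)
  ultimately show ?thesis by (metis compact_Int_closed inf.absorb_iff2)
qed

section \<open>Proper cones and their adjoint cones\<close>

lemma proper_cone_subset: "proper_cone n j K \<Longrightarrow> K \<subseteq> wedge_space n j"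
  and proper_cone_closed: "proper_cone n j K \<Longrightarrow> closed K"
  and proper_cone_add: "proper_cone n j K \<Longrightarrow> x \<in> K \<Longrightarrow> y \<in> K \<Longrightarrow> (\<lambda>I. x I + y I) \<in> K"
  and proper_cone_scale: "proper_cone n j K \<Longrightarrow> x \<in> K \<Longrightarrow> c \<ge> 0 \<Longrightarrow> (\<lambda>I. c * x I) \<in> K"
  and proper_cone_pointed: "proper_cone n j K \<Longrightarrow> x \<in> K \<Longrightarrow> (\<lambda>I. - x I) \<in> K \<Longrightarrow> x = (\<lambda>_. 0)"
  and proper_cone_solid: "proper_cone n j K \<Longrightarrow> winterior n j K \<noteq> {}"
  unfolding proper_cone_def by blast+

lemma zero_in_proper_cone: "proper_cone n j K \<Longrightarrow> (\<lambda>_. 0) \<in> K"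
  using proper_cone_scale[of n j K _ 0] proper_cone_solid[of n j K]
  unfolding winterior_def by auto

lemma compact_proper_cone_sphere:
  assumes "proper_cone n j K"
  shows "compact (K \<inter> {x. wnorm n j x = 1})"
proof -
  have "compact ((K \<inter> {x. wnorm n j x = 1}) \<inter> {x. wnorm n j x \<le> 1})"
    using assms proper_cone_subset proper_cone_closed
    by (intro compact_Int_wnorm_le closed_Int closed_Collect_eq continuous_intros) auto
  then show ?thesis by (simp add: Int_absorb2 subset_iff)
qed

lemma nonneg_if_quadratic_nonneg_near_0:
  fixes a b :: real
  assumes "b \<ge> 0" and "\<And>t. 0 < t \<Longrightarrow> t < 1 \<Longrightarrow> 0 \<le> 2*t*a + t\<^sup>2*b"
  shows "0 \<le> a"
proof (rule ccontr)
  assume "\<not> 0 \<le> a"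
  define t where "t = min (1/2) (-a/(b+1))"
  have "-a/(b+1) > 0" using \<open>\<not> 0 \<le> a\<close> assms(1) by (intro divide_pos_pos) auto
  then have t: "0 < t" "t < 1" by (auto simp: t_def)
  have "t * (b+1) \<le> -a"
    using assms(1) mult_right_mono[of t "-a/(b+1)" "b+1"] by (simp add: t_def)
  then have "a + t * b \<le> 0" using t by (simp add: algebra_simps)
  then have "t * (a + t * b) \<le> 0" using t by (simp add: mult_nonneg_nonpos)
  then have "2*t*a + t\<^sup>2*b \<le> t * a" by (simp add: power2_eq_square algebra_simps)
  moreover have "t * a < 0" using t \<open>\<not> 0 \<le> a\<close> by (simp add: mult_pos_neg)
  ultimately show False using assms(2)[OF t] by linarith
qed

lemma winner_nonneg_if_wnorm_minimal:
  assumes "\<And>t. 0 < t \<Longrightarrow> t < 1 \<Longrightarrow> wnorm n j r \<le> wnorm n j (\<lambda>I. r I + t * v I)"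
  shows "winner n j v r \<ge> 0"
proof (rule nonneg_if_quadratic_nonneg_near_0)
  show "winner n j v v \<ge> 0" by (simp add: winner_self)
  fix t :: real assume t: "0 < t" "t < 1"
  have "winner n j r r \<le> winner n j (\<lambda>I. r I + t * v I) (\<lambda>I. r I + t * v I)"
    unfolding winner_self using assms[OF t] by (simp add: power_mono wnorm_nonneg)
  moreover have "winner n j (\<lambda>I. r I + t * v I) (\<lambda>I. r I + t * v I)
      = winner n j r r + 2*t*winner n j v r + t\<^sup>2*winner n j v v"
    using winner_commute[of n j r v] by (simp add: power2_eq_square algebra_simps)
  ultimately show "0 \<le> 2*t*winner n j v r + t\<^sup>2*winner n j v v" by linarith
qed

lemma proper_cone_nearest_point:
  assumes K: "proper_cone n j K" and a: "a \<in> wedge_space n j"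
  obtains q where "q \<in> K" "\<And>k. k \<in> K \<Longrightarrow> wnorm n j (\<lambda>I. q I - a I) \<le> wnorm n j (\<lambda>I. k I - a I)"
proof -
  define d where "d k = wnorm n j (\<lambda>I. k I - a I)" for k
  define C where "C = K \<inter> {x. wnorm n j x \<le> 2 * wnorm n j a}"
  have "compact C"
    unfolding C_def using K by (intro compact_Int_wnorm_le proper_cone_closed proper_cone_subset)
  moreover have zero_C: "(\<lambda>_. 0) \<in> C"
    unfolding C_def using zero_in_proper_cone[OF K] wnorm_nonneg[of n j a] by simp
  moreover have "continuous_on C d" unfolding d_def wnorm_def winner_def
    by (intro continuous_intros continuous_on_subset[OF continuous_on_product_coordinates]) auto
  ultimately obtain q where q: "q \<in> C" "\<And>y. y \<in> C \<Longrightarrow> d q \<le> d y"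
    using continuous_attains_inf[of C d] by blast
  have "d q \<le> d k" if k: "k \<in> K" for k
  proof (cases "wnorm n j k \<le> 2 * wnorm n j a")
    case True then show ?thesis using q k unfolding C_def by auto
  next
    case False
    \<comment> \<open>far points are farther from a than the origin, which is in C\<close>
    have "wnorm n j k \<le> d k + wnorm n j a"
      unfolding d_def using wnorm_add_le[of n j "\<lambda>I. k I - a I" a] by simp
    moreover have "d (\<lambda>_. 0) = wnorm n j a"
      unfolding d_def using wnorm_scale[of n j "-1" a] by simp
    ultimately show ?thesis using False q(2)[OF zero_C] by linarith
  qed
  then show ?thesis using that q(1) unfolding C_def d_def by auto
qed

lemma proper_cone_nearest_point_variational:
  assumes K: "proper_cone n j K" and q: "q \<in> K"
    and min: "\<And>k. k \<in> K \<Longrightarrow> wnorm n j (\<lambda>I. q I - a I) \<le> wnorm n j (\<lambda>I. k I - a I)"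
  shows "k \<in> K \<Longrightarrow> winner n j k (\<lambda>I. q I - a I) \<ge> 0"
    and "winner n j (\<lambda>I. - q I) (\<lambda>I. q I - a I) \<ge> 0"
proof -
  show "winner n j k (\<lambda>I. q I - a I) \<ge> 0" if k: "k \<in> K"
  proof (rule winner_nonneg_if_wnorm_minimal)
    fix t :: real assume "0 < t"
    then have "(\<lambda>I. q I + t * k I) \<in> K"
      using K q k by (simp add: proper_cone_add proper_cone_scale)
    from min[OF this] show "wnorm n j (\<lambda>I. q I - a I) \<le> wnorm n j (\<lambda>I. q I - a I + t * k I)"
      by (simp add: algebra_simps)
  qed
  show "winner n j (\<lambda>I. - q I) (\<lambda>I. q I - a I) \<ge> 0"
  proof (rule winner_nonneg_if_wnorm_minimal)
    fix t :: real assume "t < 1"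
    then have "(\<lambda>I. (1 - t) * q I) \<in> K" using K q by (simp add: proper_cone_scale)
    from min[OF this] show "wnorm n j (\<lambda>I. q I - a I) \<le> wnorm n j (\<lambda>I. q I - a I + t * - q I)"
      by (simp add: algebra_simps)
  qed
qed

text \<open>Project -x onto K: the residual r = q + x lies in the adjoint cone,
  and pointedness of K forces r \<noteq> 0.\<close>

lemma proper_cone_separation:
  assumes K: "proper_cone n j K" and x: "x \<in> K" "x \<noteq> (\<lambda>_. 0)"
  obtains r where "r \<in> adjoint_cone n j K" "winner n j x r > 0"
proof -
  have xW: "x \<in> wedge_space n j" using x K proper_cone_subset by blast
  then have "(\<lambda>I. - x I) \<in> wedge_space n j" unfolding wedge_space_def by auto
  then obtain q where q: "q \<in> K"
    and min: "\<And>k. k \<in> K \<Longrightarrow> wnorm n j (\<lambda>I. q I - - x I) \<le> wnorm n j (\<lambda>I. k I - - x I)"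
    using proper_cone_nearest_point[OF K] by blast
  define r where "r = (\<lambda>I. q I + x I)"
  have r_dual: "winner n j k r \<ge> 0" if "k \<in> K" for k
    using proper_cone_nearest_point_variational(1)[OF K q min that] by (simp add: r_def)
  have q_r: "winner n j (\<lambda>I. - q I) r \<ge> 0"
    using proper_cone_nearest_point_variational(2)[OF K q min] by (simp add: r_def)
  have rW: "r \<in> wedge_space n j"
    using q xW K proper_cone_subset unfolding r_def wedge_space_def by fastforce
  have "r \<noteq> (\<lambda>_. 0)"
  proof
    assume "r = (\<lambda>_. 0)"
    then have "q = (\<lambda>I. - x I)" unfolding r_def by (simp add: fun_eq_iff eq_neg_iff_add_eq_0)
    then show False using proper_cone_pointed[OF K x(1)] q x(2) by simp
  qed
  then have "winner n j r r > 0" using wnorm_pos[OF rW] by (simp add: winner_self)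
  moreover have "winner n j x r = winner n j r r + winner n j (\<lambda>I. - q I) r"
    using winner_add_left[of n j q x r] by (simp add: r_def[symmetric])
  ultimately have "winner n j x r > 0" using q_r by linarith
  moreover have "r \<in> adjoint_cone n j K" unfolding adjoint_cone_def using rW r_dual by auto
  ultimately show ?thesis using that by blast
qed

lemma compact_imp_pos_lower_bound:
  fixes f :: "'a::topological_space \<Rightarrow> real"
  assumes "compact S" "continuous_on S f" "\<And>x. x \<in> S \<Longrightarrow> f x > 0"
  obtains c where "c > 0" "\<And>x. x \<in> S \<Longrightarrow> c \<le> f x"
proof (cases "S = {}")
  case False
  then obtain x0 where "x0 \<in> S" "\<And>x. x \<in> S \<Longrightarrow> f x0 \<le> f x"
    using continuous_attains_inf[OF assms(1) _ assms(2)] by blast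
  then show ?thesis using that assms(3) by blast
qed (use that[of 1] in auto)

lemma winner_ge_wnorm_if_pos_on_sphere:
  assumes K: "proper_cone n j K"
    and pos: "\<And>x. x \<in> K \<Longrightarrow> wnorm n j x = 1 \<Longrightarrow> winner n j x y > 0"
  obtains c where "c > 0" "\<And>x. x \<in> K \<Longrightarrow> c * wnorm n j x \<le> winner n j x y"
proof -
  obtain c where c: "c > 0" "\<And>x. x \<in> K \<inter> {x. wnorm n j x = 1} \<Longrightarrow> c \<le> winner n j x y"
    using compact_imp_pos_lower_bound[OF compact_proper_cone_sphere[OF K], of "\<lambda>x. winner n j x y"]
      pos by (auto intro: continuous_intros)
  have "c * wnorm n j x \<le> winner n j x y" if x: "x \<in> K" for x
  proof (cases "x = (\<lambda>_. 0)")
    case False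
    define u where "u = wnorm n j x"
    have "u > 0" unfolding u_def using wnorm_pos x K proper_cone_subset False by blast
    have "(\<lambda>I. (1 / u) * x I) \<in> K"
      using proper_cone_scale[OF K x, of "1 / u"] \<open>u > 0\<close> by simp
    moreover have "wnorm n j (\<lambda>I. (1 / u) * x I) = 1"
      using wnorm_scale[of n j "1 / u" x] \<open>u > 0\<close> by (simp add: u_def)
    ultimately have "c \<le> winner n j (\<lambda>I. (1 / u) * x I) y" using c(2) by blast
    then have "c \<le> winner n j x y / u" using winner_scale_left[of n j "1 / u" x y] by simp
    with \<open>u > 0\<close> show ?thesis by (simp add: u_def field_simps)
  qed simp
  then show ?thesis using that c(1) by blast
qed

lemma winterior_adjoint_coneI:
  assumes y: "y \<in> wedge_space n j" and c: "c > 0"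
    and bound: "\<And>x. x \<in> K \<Longrightarrow> c * wnorm n j x \<le> winner n j x y"
  shows "y \<in> winterior n j (adjoint_cone n j K)"
proof -
  have "z \<in> adjoint_cone n j K"
    if z: "z \<in> wedge_space n j" "wnorm n j (\<lambda>I. z I - y I) < c" for z
  proof -
    have "winner n j x z \<ge> 0" if x: "x \<in> K" for x
    proof -
      have "- winner n j x (\<lambda>I. z I - y I) \<le> wnorm n j x * wnorm n j (\<lambda>I. z I - y I)"
        using abs_winner_le by (metis abs_le_iff)
      also have "\<dots> \<le> c * wnorm n j x"
        using mult_left_mono[OF less_imp_le[OF z(2)] wnorm_nonneg[of n j x]]
        by (simp add: mult.commute)
      finally show ?thesis using bound[OF x] by simp
    qed
    then show ?thesis using z unfolding adjoint_cone_def by auto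
  qed
  moreover have "winner n j x y \<ge> 0" if "x \<in> K" for x
    using bound[OF that] c wnorm_nonneg[of n j x] by (smt (verit) mult_nonneg_nonneg)
  then have "y \<in> adjoint_cone n j K" unfolding adjoint_cone_def using y by auto
  ultimately show ?thesis unfolding winterior_def using c by blast
qed

lemma winner_pos_if_winterior:
  assumes K: "proper_cone n j K" and w: "w \<in> winterior n j K"
    and z: "z \<in> adjoint_cone n j K" "z \<noteq> (\<lambda>_. 0)"
  shows "winner n j w z > 0"
proof -
  obtain e where e: "e > 0" "\<And>y. y \<in> wedge_space n j \<Longrightarrow> wnorm n j (\<lambda>I. y I - w I) < e \<Longrightarrow> y \<in> K"
    and wK: "w \<in> K" using w unfolding winterior_def by blast
  have zW: "z \<in> wedge_space n j" using z unfolding adjoint_cone_def by auto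
  have nz: "wnorm n j z > 0" using wnorm_pos[OF zW z(2)] .
  \<comment> \<open>w - d z stays in K, so \<open>\<langle>w, z\<rangle> \<ge> d \<parallel>z\<parallel>\<^sup>2 > 0\<close>\<close>
  define d where "d = e / (2 * wnorm n j z)"
  have d: "d > 0" using e nz unfolding d_def by simp
  have "(\<lambda>I. w I + (- d) * z I) \<in> K"
  proof (rule e(2))
    show "(\<lambda>I. w I + (- d) * z I) \<in> wedge_space n j"
      using wK K zW proper_cone_subset unfolding wedge_space_def by fastforce
    have "wnorm n j (\<lambda>I. w I + (- d) * z I - w I) = d * wnorm n j z"
      using wnorm_scale[of n j "-d" z] d by simp
    also have "\<dots> < e" using nz e unfolding d_def by simp
    finally show "wnorm n j (\<lambda>I. w I + (- d) * z I - w I) < e" .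
  qed
  then have "winner n j w z - d * winner n j z z \<ge> 0"
    using z unfolding adjoint_cone_def by auto
  moreover have "winner n j z z > 0" using nz by (simp add: winner_self)
  ultimately show ?thesis using d by (smt (verit) mult_pos_pos)
qed

lemma closed_adjoint_cone: "closed (adjoint_cone n j K)"
proof -
  have "adjoint_cone n j K = wedge_space n j \<inter> (\<Inter>x\<in>K. {y. 0 \<le> winner n j x y})"
    unfolding adjoint_cone_def by auto
  moreover have "closed {y. 0 \<le> winner n j x y}" for x
    by (intro closed_Collect_le continuous_intros)
  ultimately show ?thesis by (simp add: closed_Int closed_INT closed_wedge_space)
qed

text \<open>Finitely many separating functionals cover the compact
  unit sphere of K, and their sum is strictly positive on it.\<close>

lemma winterior_adjoint_cone_nonempty:
  assumes K: "proper_cone n j K"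
  shows "winterior n j (adjoint_cone n j K) \<noteq> {}"
proof -
  let ?S = "K \<inter> {x. wnorm n j x = 1}"
  have "?S \<subseteq> (\<Union>r\<in>adjoint_cone n j K. {x. winner n j x r > 0})"
    using proper_cone_separation[OF K] wnorm_eq_1_imp_nonzero by blast
  moreover have "open {x. winner n j x r > 0}" for r
    by (intro open_Collect_less continuous_intros)
  ultimately obtain F where F: "F \<subseteq> adjoint_cone n j K" "finite F"
    "?S \<subseteq> (\<Union>r\<in>F. {x. winner n j x r > 0})"
    using compactE_image[OF compact_proper_cone_sphere[OF K]] by metis
  define y where "y = (\<lambda>I. \<Sum>r\<in>F. r I)"
  have yW: "y \<in> wedge_space n j"
    using F(1) unfolding y_def wedge_space_def adjoint_cone_def by (auto intro!: sum.neutral)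
  have "winner n j x y > 0" if "x \<in> K" "wnorm n j x = 1" for x
  proof -
    have "x \<in> ?S" using that by simp
    then obtain r where r: "r \<in> F" "winner n j x r > 0" using F(3) by blast
    have "\<forall>r\<in>F. winner n j x r \<ge> 0" using F(1) that(1) unfolding adjoint_cone_def by auto
    then show ?thesis
      unfolding y_def winner_sum_right using sum_pos2[OF F(2) r(1)] r(2) by blast
  qed
  then obtain c where "c > 0" "\<And>x. x \<in> K \<Longrightarrow> c * wnorm n j x \<le> winner n j x y"
    using winner_ge_wnorm_if_pos_on_sphere[OF K] by blast
  with yW have "y \<in> winterior n j (adjoint_cone n j K)" by (rule winterior_adjoint_coneI)
  then show ?thesis by blast
qed

lemma proper_cone_adjoint_cone:
  assumes K: "proper_cone n j K"
  shows "proper_cone n j (adjoint_cone n j K)"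
  unfolding proper_cone_def
proof (intro conjI ballI allI impI)
  show "adjoint_cone n j K \<subseteq> wedge_space n j" unfolding adjoint_cone_def by auto
  show "closed (adjoint_cone n j K)" by (rule closed_adjoint_cone)
  show "winterior n j (adjoint_cone n j K) \<noteq> {}" by (rule winterior_adjoint_cone_nonempty[OF K])
next
  fix x y assume "x \<in> adjoint_cone n j K" "y \<in> adjoint_cone n j K"
  then show "(\<lambda>I. x I + y I) \<in> adjoint_cone n j K"
    unfolding adjoint_cone_def wedge_space_def by auto
next
  fix x and c :: real assume "x \<in> adjoint_cone n j K" "c \<ge> 0"
  then show "(\<lambda>I. c * x I) \<in> adjoint_cone n j K"
    unfolding adjoint_cone_def wedge_space_def by auto
next
  fix y assume y: "y \<in> adjoint_cone n j K \<and> (\<lambda>I. - y I) \<in> adjoint_cone n j K"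
  \<comment> \<open>an interior point of K would pair positively with both y and -y\<close>
  obtain w where w: "w \<in> winterior n j K" using proper_cone_solid[OF K] by blast
  show "y = (\<lambda>_. 0)"
  proof (rule ccontr)
    assume "y \<noteq> (\<lambda>_. 0)"
    then have "(\<lambda>I. - y I) \<noteq> (\<lambda>_. 0)" by (auto simp: fun_eq_iff)
    then have "winner n j w (\<lambda>I. - y I) > 0" using winner_pos_if_winterior[OF K w] y by blast
    moreover have "winner n j w y > 0"
      using winner_pos_if_winterior[OF K w] y \<open>y \<noteq> (\<lambda>_. 0)\<close> by blast
    ultimately show False by simp
  qed
qed

section \<open>Adjoint operators on adjoint cones\<close>

lemma K_nonnegative_adjoint:
  assumes adj: "\<And>x z. winner n j x (B' z) = winner n j (B x) z"
    and B': "\<And>z. B' z \<in> wedge_space n j"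
    and "K_nonnegative B K"
  shows "K_nonnegative B' (adjoint_cone n j K)"
  using assms unfolding K_nonnegative_def adjoint_cone_def by auto

lemma K_positive_adjoint:
  assumes K: "proper_cone n j K"
    and adj: "\<And>x z. winner n j x (B' z) = winner n j (B x) z"
    and B': "\<And>z. B' z \<in> wedge_space n j"
    and pos: "K_positive n j B K"
  shows "K_positive n j B' (adjoint_cone n j K)"
  unfolding K_positive_def
proof
  fix z assume z: "z \<in> adjoint_cone n j K - {\<lambda>_. 0}"
  have "winner n j x (B' z) > 0" if "x \<in> K" "wnorm n j x = 1" for x
    using pos that z winner_pos_if_winterior[OF K] wnorm_eq_1_imp_nonzero
    unfolding K_positive_def adj by blast
  then obtain c where "c > 0" "\<And>x. x \<in> K \<Longrightarrow> c * wnorm n j x \<le> winner n j x (B' z)"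
    using winner_ge_wnorm_if_pos_on_sphere[OF K] by blast
  then show "B' z \<in> winterior n j (adjoint_cone n j K)" by (rule winterior_adjoint_coneI[OF B'])
qed

theorem proposition14:
  fixes n :: nat and A :: "nat \<Rightarrow> nat \<Rightarrow> real" and K :: "nat \<Rightarrow> (nat set \<Rightarrow> real) set"
  assumes "totally_positive_structure n K"
  shows "totally_positive_structure n (\<lambda>j. adjoint_cone n j (K j))
    \<and> (GTP n A K \<longrightarrow> GTP n (adjoint_mat A) (\<lambda>j. adjoint_cone n j (K j)))
    \<and> (GSTP n A K \<longrightarrow> GSTP n (adjoint_mat A) (\<lambda>j. adjoint_cone n j (K j)))"
proof (intro conjI impI)
  have proper: "proper_cone n j (K j)" if "j \<in> {1..n}" for j
    using assms that unfolding totally_positive_structure_def by blast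
  then show "totally_positive_structure n (\<lambda>j. adjoint_cone n j (K j))"
    unfolding totally_positive_structure_def by (blast intro: proper_cone_adjoint_cone)
  show "GTP n (adjoint_mat A) (\<lambda>j. adjoint_cone n j (K j))" if "GTP n A K"
    using that unfolding GTP_def
    by (blast intro: K_nonnegative_adjoint winner_wedge_op_adjoint_mat wedge_op_in_wedge_space)
  show "GSTP n (adjoint_mat A) (\<lambda>j. adjoint_cone n j (K j))" if "GSTP n A K"
    using that proper unfolding GSTP_def
    by (blast intro: K_positive_adjoint winner_wedge_op_adjoint_mat wedge_op_in_wedge_space)
qed

end
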